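(* Let $G=(V,E)$ be an undirected graph (finite or infinite) and $M=M(S)$ a multiplex of $G$ generated by a simplex $S$, with $\mathrm{rank}(M)\ge2$. Then for every $x\in\widetilde M$ there exist two color classes $\widehat A,\widehat B\subseteq M$ with $\widetilde A\setminus\widetilde B\neq\emptyset$ and $\widetilde B\setminus\widetilde A\neq\emptyset$ such that $x\in\widetilde A\cap\widetilde B$.
   Context: A graph $G=(V,E)$ has vertex set $V$ and edge set $E\subseteq V^2$; it is undirected if $E$ is irreflexive and symmetric. Implication classes: on $E$ define $(a,b)\Gamma(a',b')$ iff either $a=a'$ and $(b,b')\notin E$, or $b=b'$ and $(a,a')\notin E$; the classes of the transitive closure $\Gamma^*$ are the implication classes. For an implication class $A$, $A^{-1}=\{(b,a):(a,b)\in A\}$ and the color class is $\widehat A=A\cup A^{-1}$; $\widetilde A$ is the set of vertices spanned by $\widehat A$. A simplex of rank $r\ge1$ is a complete sub-graph $S=(V_S,E_S)$ of $G$ on $r+1$ vertices whose distinct undirected edges lie in distinct color classes. The multiplex generated by $S$ is $M(S)=\bigcup\{\widehat A:\widehat A\text{ a color class},\ \widehat A\cap E_S\neq\emptyset\}$, of rank $r$; $\widetilde M$ is the set of vertices spanned by $M$. *)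

theory Defs
  imports Main
begin

definition undirected_graph :: "'a set \<Rightarrow> ('a \<times> 'a) set \<Rightarrow> bool" where
  "undirected_graph V E \<longleftrightarrow> E \<subseteq> V \<times> V \<and> irrefl E \<and> sym E"

definition Gamma :: "('a \<times> 'a) set \<Rightarrow> (('a \<times> 'a) \<times> ('a \<times> 'a)) set" where
  "Gamma E = {((a,b),(a',b')). (a,b) \<in> E \<and> (a',b') \<in> E \<and>
      ((a = a' \<and> (b,b') \<notin> E) \<or> (b = b' \<and> (a,a') \<notin> E))}"

text \<open>Implication classes: classes of the transitive closure of Gamma
  (Gamma is reflexive on E, so the reflexive-transitive closure gives the same classes).\<close>
definition implication_class :: "('a \<times> 'a) set \<Rightarrow> ('a \<times> 'a) set \<Rightarrow> bool" where
  "implication_class E A \<longleftrightarrow> (\<exists>e \<in> E. A = (Gamma E)\<^sup>+ `` {e})"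

definition color_class_of :: "('a \<times> 'a) set \<Rightarrow> ('a \<times> 'a) set \<Rightarrow> bool" where
  "color_class_of E C \<longleftrightarrow> (\<exists>A. implication_class E A \<and> C = A \<union> A\<inverse>)"

definition span_vertices :: "('a \<times> 'a) set \<Rightarrow> 'a set" where
  "span_vertices F = {v. \<exists>(a,b) \<in> F. v = a \<or> v = b}"

definition simplex_edges :: "'a set \<Rightarrow> ('a \<times> 'a) set" where
  "simplex_edges VS = {(a,b). a \<in> VS \<and> b \<in> VS \<and> a \<noteq> b}"

definition is_simplex :: "'a set \<Rightarrow> ('a \<times> 'a) set \<Rightarrow> 'a set \<Rightarrow> nat \<Rightarrow> bool" where
  "is_simplex V E VS r \<longleftrightarrow> r \<ge> 1 \<and> finite VS \<and> card VS = r + 1 \<and> VS \<subseteq> V \<and>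
     simplex_edges VS \<subseteq> E \<and>
     (\<forall>a b c d. (a,b) \<in> simplex_edges VS \<and> (c,d) \<in> simplex_edges VS \<and> {a,b} \<noteq> {c,d} \<longrightarrow>
        \<not> (\<exists>C. color_class_of E C \<and> (a,b) \<in> C \<and> (c,d) \<in> C))"

definition multiplex :: "('a \<times> 'a) set \<Rightarrow> 'a set \<Rightarrow> ('a \<times> 'a) set" where
  "multiplex E VS = \<Union>{C. color_class_of E C \<and> C \<inter> simplex_edges VS \<noteq> {}}"

end

(* Let a, b, c span a triangle whose three edges lie in distinct color classes.  Following
   a Gamma-chain from (b, c), every edge (u, v) of the implication class of (b, c) has
   (a, u) in the implication class of (a, b) and (a, v) in that of (a, c): a Gamma-step that
   breaks this would put an edge at a into the class of (b, c), merging two color classes.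
   So the apex a is not spanned by the color class of bc, while every vertex spanned by it
   is spanned by the class of ab or of ac.  Now if x is spanned by the class of a simplex
   edge pq, a third simplex vertex s (rank >= 2) gives x in the span of the class of ps,
   say; then q and s separate the two classes. *)

theory Submission
  imports Defs
begin

definition impl_class :: "('a \<times> 'a) set \<Rightarrow> 'a \<times> 'a \<Rightarrow> ('a \<times> 'a) set" where
  "impl_class E e = (Gamma E)\<^sup>+ `` {e}"

definition color_class :: "('a \<times> 'a) set \<Rightarrow> 'a \<times> 'a \<Rightarrow> ('a \<times> 'a) set" where
  "color_class E e = impl_class E e \<union> (impl_class E e)\<inverse>"

lemma color_class_of_iff: "color_class_of E C \<longleftrightarrow> (\<exists>e\<in>E. C = color_class E e)"
  unfolding color_class_of_def implication_class_def color_class_def impl_class_def by auto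

lemma Gamma_subset: "Gamma E \<subseteq> E \<times> E"
  unfolding Gamma_def by auto

lemma span_vertices_Un: "span_vertices (F \<union> G) = span_vertices F \<union> span_vertices G"
  unfolding span_vertices_def by blast

lemma span_vertices_converse [simp]: "span_vertices (F\<inverse>) = span_vertices F"
  unfolding span_vertices_def by blast

lemma span_vertices_color_class: "span_vertices (color_class E e) = span_vertices (impl_class E e)"
  unfolding color_class_def by (simp add: span_vertices_Un)

lemma span_verticesE:
  assumes "x \<in> span_vertices F"
  obtains u v where "(u, v) \<in> F" "x = u \<or> x = v"
  using assms unfolding span_vertices_def by blast

lemma span_verticesI: "(u, v) \<in> F \<Longrightarrow> u \<in> span_vertices F \<and> v \<in> span_vertices F"
  unfolding span_vertices_def by blast

locale ugraph =
  fixes V :: "'a set" and E :: "('a \<times> 'a) set"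
  assumes undirected: "undirected_graph V E"
begin

lemma sym_edges: "sym E" and irrefl_edges: "irrefl E"
  using undirected unfolding undirected_graph_def by auto

lemma edge_sym: "(a, b) \<in> E \<Longrightarrow> (b, a) \<in> E"
  using sym_edges by (rule symD)

lemma no_loop: "(a, a) \<notin> E"
  using irrefl_edges by (simp add: irrefl_def)

lemma Gamma_refl: "e \<in> E \<Longrightarrow> (e, e) \<in> Gamma E"
  unfolding Gamma_def using no_loop by (cases e) auto

lemma sym_Gamma: "sym (Gamma E)"
  unfolding Gamma_def sym_def using edge_sym by auto

lemma Gamma_swap: "((a, b), (c, d)) \<in> Gamma E \<Longrightarrow> ((b, a), (d, c)) \<in> Gamma E"
  unfolding Gamma_def using edge_sym by auto

lemma equiv_Gamma_trancl: "equiv E ((Gamma E)\<^sup>+)"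
proof (rule equivI)
  show "(Gamma E)\<^sup>+ \<subseteq> E \<times> E"
    using Gamma_subset by (rule trancl_subset_Sigma)
  show "refl_on E ((Gamma E)\<^sup>+)"
    by (rule refl_onI) (simp add: Gamma_refl r_into_trancl')
qed (simp_all add: sym_trancl sym_Gamma)

lemma trancl_Gamma_swap:
  "(f, g) \<in> (Gamma E)\<^sup>+ \<Longrightarrow> (prod.swap f, prod.swap g) \<in> (Gamma E)\<^sup>+"
proof (induction rule: trancl_induct)
  case (base g)
  then show ?case using Gamma_swap by (cases f; cases g) auto
next
  case (step g h)
  then have "(prod.swap g, prod.swap h) \<in> Gamma E" using Gamma_swap by (cases g; cases h) auto
  with step.IH show ?case by (rule trancl_into_trancl)
qed

lemma impl_class_subset: "impl_class E e \<subseteq> E"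
  unfolding impl_class_def using equiv_type[OF equiv_Gamma_trancl] by blast

lemma impl_class_nonempty_imp_edge: "f \<in> impl_class E e \<Longrightarrow> e \<in> E"
  unfolding impl_class_def using equiv_type[OF equiv_Gamma_trancl] by blast

lemma impl_class_self: "e \<in> E \<Longrightarrow> e \<in> impl_class E e"
  unfolding impl_class_def using equiv_Gamma_trancl by (rule equiv_class_self)

lemma impl_class_eq: "f \<in> impl_class E e \<Longrightarrow> impl_class E f = impl_class E e"
  unfolding impl_class_def using equiv_class_eq[OF equiv_Gamma_trancl] by blast

lemma impl_class_Gamma_closed: "f \<in> impl_class E e \<Longrightarrow> (f, g) \<in> Gamma E \<Longrightarrow> g \<in> impl_class E e"
  unfolding impl_class_def by auto

lemma impl_class_swap: "impl_class E (b, a) = (impl_class E (a, b))\<inverse>"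
  unfolding impl_class_def using trancl_Gamma_swap by fastforce

lemma color_class_self: "e \<in> E \<Longrightarrow> e \<in> color_class E e"
  unfolding color_class_def using impl_class_self by blast

lemma color_class_commute: "color_class E (b, a) = color_class E (a, b)"
  unfolding color_class_def impl_class_swap[where a = a and b = b] by auto

lemma color_class_eq:
  assumes "f \<in> color_class E e"
  shows "color_class E f = color_class E e"
proof (cases "f \<in> impl_class E e")
  case True
  then show ?thesis unfolding color_class_def by (simp add: impl_class_eq)
next
  case False
  with assms obtain a b where "f = (a, b)" "(b, a) \<in> impl_class E e"
    unfolding color_class_def by (cases f) auto
  then show ?thesis by (metis color_class_commute color_class_def impl_class_eq)
qed

lemma Gamma_triangle_step:
  assumes "((b, c), (u, v)) \<in> Gamma E" "(a, b) \<in> E" "(a, c) \<in> E"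
  shows "((u, v), (b, a)) \<in> Gamma E \<or> ((u, v), (a, c)) \<in> Gamma E \<or>
    ((a, b), (a, u)) \<in> Gamma E \<and> ((a, c), (a, v)) \<in> Gamma E"
  using assms Gamma_refl edge_sym unfolding Gamma_def by auto

lemma impl_class_triangle:
  assumes "(a, b) \<in> E" "(a, c) \<in> E"
    and ab: "(a, b) \<notin> color_class E (b, c)" and ac: "(a, c) \<notin> color_class E (b, c)"
    and "(u, v) \<in> impl_class E (b, c)"
  shows "(a, u) \<in> impl_class E (a, b) \<and> (a, v) \<in> impl_class E (a, c)"
proof -
  have "((b, c), (u, v)) \<in> (Gamma E)\<^sup>*"
    using \<open>(u, v) \<in> impl_class E (b, c)\<close> unfolding impl_class_def by auto
  then show ?thesis
  proof (induction rule: rtrancl_induct2)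
    case refl
    then show ?case using assms(1,2) impl_class_self by blast
  next
    case (step b' c' u v)
    have b': "(a, b') \<in> impl_class E (a, b)" and c': "(a, c') \<in> impl_class E (a, c)"
      using step.IH by auto
    have uv: "(u, v) \<in> impl_class E (b, c)"
      using step.hyps unfolding impl_class_def by (auto intro: rtrancl_into_trancl1)
    have side_in_class_bc: "(a, d') \<in> color_class E (b, c)"
      if "(a, d) \<in> impl_class E (a, d')" "(a, d) \<in> color_class E (b, c)" for d d'
    proof -
      have "(a, d) \<in> color_class E (a, d')" using that(1) unfolding color_class_def by blast
      then have "color_class E (b, c) = color_class E (a, d')" using that(2) by (metis color_class_eq)
      moreover have "(a, d') \<in> E" using that(1) by (rule impl_class_nonempty_imp_edge)
      ultimately show ?thesis by (simp add: color_class_self)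
    qed
    from Gamma_triangle_step[of b' c' u v a] step.hyps(2) b' c' impl_class_subset
    consider "((u, v), (b', a)) \<in> Gamma E" | "((u, v), (a, c')) \<in> Gamma E"
      | "((a, b'), (a, u)) \<in> Gamma E" "((a, c'), (a, v)) \<in> Gamma E"
      by blast
    then show ?case
    proof cases
      case 1
      with uv have "(b', a) \<in> impl_class E (b, c)" by (rule impl_class_Gamma_closed)
      then have "(a, b') \<in> color_class E (b, c)" unfolding color_class_def by blast
      with b' ab side_in_class_bc show ?thesis by blast
    next
      case 2
      with uv have "(a, c') \<in> impl_class E (b, c)" by (rule impl_class_Gamma_closed)
      then have "(a, c') \<in> color_class E (b, c)" unfolding color_class_def by blast
      with c' ac side_in_class_bc show ?thesis by blast
    next
      case 3
      then show ?thesis using b' c' by (blast intro: impl_class_Gamma_closed)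
    qed
  qed
qed

lemma apex_notin_span_color_class:
  assumes "(a, b) \<in> E" "(a, c) \<in> E"
    and "(a, b) \<notin> color_class E (b, c)" "(a, c) \<notin> color_class E (b, c)"
  shows "a \<notin> span_vertices (color_class E (b, c))"
proof
  assume "a \<in> span_vertices (color_class E (b, c))"
  then obtain u v where uv: "(u, v) \<in> impl_class E (b, c)" and "a = u \<or> a = v"
    unfolding span_vertices_color_class by (rule span_verticesE)
  then have "(a, a) \<in> impl_class E (a, b) \<or> (a, a) \<in> impl_class E (a, c)"
    using impl_class_triangle[OF assms uv] by blast
  then show False using impl_class_subset no_loop by blast
qed

lemma span_color_class_triangle:
  assumes "(a, b) \<in> E" "(a, c) \<in> E"
    and "(a, b) \<notin> color_class E (b, c)" "(a, c) \<notin> color_class E (b, c)"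
  shows "span_vertices (color_class E (b, c))
    \<subseteq> span_vertices (color_class E (a, b)) \<union> span_vertices (color_class E (a, c))"
proof
  fix x
  assume "x \<in> span_vertices (color_class E (b, c))"
  then obtain u v where uv: "(u, v) \<in> impl_class E (b, c)" and "x = u \<or> x = v"
    unfolding span_vertices_color_class by (rule span_verticesE)
  with impl_class_triangle[OF assms uv]
  have "(a, x) \<in> impl_class E (a, b) \<or> (a, x) \<in> impl_class E (a, c)" by blast
  then show "x \<in> span_vertices (color_class E (a, b)) \<union> span_vertices (color_class E (a, c))"
    unfolding span_vertices_color_class by (auto dest: span_verticesI)
qed

end

locale graph_simplex = ugraph +
  fixes VS :: "'a set" and r :: nat
  assumes simplex: "is_simplex V E VS r"
begin

lemma simplex_edge: "a \<in> VS \<Longrightarrow> b \<in> VS \<Longrightarrow> a \<noteq> b \<Longrightarrow> (a, b) \<in> E"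
  using simplex unfolding is_simplex_def simplex_edges_def by blast

lemma color_class_of_simplex_edge:
  "a \<in> VS \<Longrightarrow> b \<in> VS \<Longrightarrow> a \<noteq> b \<Longrightarrow> color_class_of E (color_class E (a, b))"
  using simplex_edge color_class_of_iff by blast

lemma color_class_subset_multiplex:
  assumes "a \<in> VS" "b \<in> VS" "a \<noteq> b"
  shows "color_class E (a, b) \<subseteq> multiplex E VS"
proof -
  have "(a, b) \<in> color_class E (a, b) \<inter> simplex_edges VS"
    using assms simplex_edge color_class_self unfolding simplex_edges_def by blast
  then show ?thesis
    using color_class_of_simplex_edge[OF assms] unfolding multiplex_def by blast
qed

lemma simplex_edge_notin_color_class:
  assumes "a \<in> VS" "b \<in> VS" "c \<in> VS" "d \<in> VS" "a \<noteq> b" "c \<noteq> d" "{a, b} \<noteq> {c, d}"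
  shows "(a, b) \<notin> color_class E (c, d)"
  using simplex assms color_class_of_simplex_edge[of c d] color_class_self[of "(c, d)"] simplex_edge
  unfolding is_simplex_def simplex_edges_def by blast

lemma
  assumes "a \<in> VS" "b \<in> VS" "c \<in> VS" "distinct [a, b, c]"
  shows simplex_apex_notin_span: "a \<notin> span_vertices (color_class E (b, c))"
    and simplex_span_color_class: "span_vertices (color_class E (b, c))
      \<subseteq> span_vertices (color_class E (a, b)) \<union> span_vertices (color_class E (a, c))"
proof -
  have "(a, b) \<in> E" "(a, c) \<in> E"
    "(a, b) \<notin> color_class E (b, c)" "(a, c) \<notin> color_class E (b, c)"
    using assms simplex_edge simplex_edge_notin_color_class by (auto simp: doubleton_eq_iff)
  then show "a \<notin> span_vertices (color_class E (b, c))"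
    and "span_vertices (color_class E (b, c))
      \<subseteq> span_vertices (color_class E (a, b)) \<union> span_vertices (color_class E (a, c))"
    by (rule apex_notin_span_color_class, rule span_color_class_triangle)
qed

lemma span_multiplexE:
  assumes "x \<in> span_vertices (multiplex E VS)"
  obtains p q where "p \<in> VS" "q \<in> VS" "p \<noteq> q" "x \<in> span_vertices (color_class E (p, q))"
proof -
  obtain C where C: "color_class_of E C" "C \<inter> simplex_edges VS \<noteq> {}" "x \<in> span_vertices C"
    using assms unfolding multiplex_def span_vertices_def by blast
  then obtain p q where pq: "(p, q) \<in> C" "p \<in> VS" "q \<in> VS" "p \<noteq> q"
    unfolding simplex_edges_def by auto
  from C(1) pq(1) have "C = color_class E (p, q)"
    unfolding color_class_of_iff using color_class_eq by blast
  with pq C(3) show thesis using that by blast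
qed

lemma simplex_third_vertex:
  assumes "r \<ge> 2"
  obtains s where "s \<in> VS" "s \<noteq> p" "s \<noteq> q"
proof -
  have "card {p, q} < card VS"
    using assms simplex unfolding is_simplex_def by (simp add: card_insert_if)
  then have "\<not> VS \<subseteq> {p, q}"
    using card_mono[of "{p, q}" VS] by (meson finite.emptyI finite_insert leD)
  then show thesis using that by blast
qed

lemma separating_color_classes:
  assumes "p \<in> VS" "q \<in> VS" "s \<in> VS" "distinct [p, q, s]"
    and "x \<in> span_vertices (color_class E (p, q))" "x \<in> span_vertices (color_class E (p, s))"
  shows "\<exists>A B. color_class_of E A \<and> color_class_of E B \<and>
           A \<subseteq> multiplex E VS \<and> B \<subseteq> multiplex E VS \<and>
           span_vertices A - span_vertices B \<noteq> {} \<and>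
           span_vertices B - span_vertices A \<noteq> {} \<and>
           x \<in> span_vertices A \<inter> span_vertices B"
proof -
  let ?A = "color_class E (p, q)" and ?B = "color_class E (p, s)"
  have "p \<noteq> q" "p \<noteq> s" using assms(4) by auto
  then have classes: "color_class_of E ?A" "color_class_of E ?B"
      "?A \<subseteq> multiplex E VS" "?B \<subseteq> multiplex E VS"
    using assms(1-3) by (simp_all add: color_class_of_simplex_edge color_class_subset_multiplex)
  have "(p, q) \<in> ?A" "(p, s) \<in> ?B"
    using \<open>p \<noteq> q\<close> \<open>p \<noteq> s\<close> assms(1-3) by (simp_all add: color_class_self simplex_edge)
  then have "q \<in> span_vertices ?A" "s \<in> span_vertices ?B"
    by (auto dest: span_verticesI)
  moreover have "q \<notin> span_vertices ?B" "s \<notin> span_vertices ?A"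
    using assms(1-4) by (intro simplex_apex_notin_span; auto)+
  ultimately have
    "span_vertices ?A - span_vertices ?B \<noteq> {}" "span_vertices ?B - span_vertices ?A \<noteq> {}"
    by auto
  with classes show ?thesis
    using assms(5,6) by (intro exI[of _ ?A] exI[of _ ?B]) simp
qed

end

theorem proposition4p3:
  fixes V :: "'a set" and E :: "('a \<times> 'a) set" and VS :: "'a set" and r :: nat
  assumes "undirected_graph V E"
    and "is_simplex V E VS r"
    and "r \<ge> 2"
    and "x \<in> span_vertices (multiplex E VS)"
  shows "\<exists>A B. color_class_of E A \<and> color_class_of E B \<and>
           A \<subseteq> multiplex E VS \<and> B \<subseteq> multiplex E VS \<and>
           span_vertices A - span_vertices B \<noteq> {} \<and>
           span_vertices B - span_vertices A \<noteq> {} \<and>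
           x \<in> span_vertices A \<inter> span_vertices B"
proof -
  interpret graph_simplex V E VS r
    using assms(1, 2) by unfold_locales
  obtain p q where pq: "p \<in> VS" "q \<in> VS" "p \<noteq> q"
    and x_pq: "x \<in> span_vertices (color_class E (p, q))"
    using assms(4) by (rule span_multiplexE)
  obtain s where s: "s \<in> VS" "s \<noteq> p" "s \<noteq> q"
    using assms(3) by (rule simplex_third_vertex)
  have "x \<in> span_vertices (color_class E (p, s)) \<or> x \<in> span_vertices (color_class E (q, s))"
    using simplex_span_color_class[of s p q] pq s x_pq
    unfolding color_class_commute[of p s] color_class_commute[of q s] by auto
  then show ?thesis
  proof
    assume "x \<in> span_vertices (color_class E (p, s))"
    with pq s x_pq show ?thesis by (intro separating_color_classes[of p q s]) auto
  next
    assume "x \<in> span_vertices (color_class E (q, s))"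
    with pq s x_pq show ?thesis
      by (intro separating_color_classes[of q p s]) (auto simp: color_class_commute[of p q])
  qed
qed

end
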